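(* Let $\mathcal{G}$ be an $n$-dimensional real Lie algebra with basis $\{e_i\}_{1\le i\le n}$ and structure constants $[e_i,e_j]=\sum_k c_{ij}^k e_k$, and let $(x_1,\dots,x_n)$ be the linear coordinates on $\mathcal{G}^*$ with respect to the dual basis $\{e^i\}$. Equip $\mathcal{G}^*$ with the Lie-Poisson structure $\pi^{ij}(x_ue^u)=\sum_k c_{ij}^k x_k$ and the volume form $dx_1\wedge\dots\wedge dx_n$. Then a function $f\in C^\infty(\mathcal{G}^* )$ is a last multiplier of its Hamiltonian vector field $A_f$ if and only if $$\sum_{i,j=1}^n c_{ij}^j\frac{\partial f}{\partial x_i}=0.$$
   Context: The Poisson bracket is $\{g,h\}=\sum_{i,j}\pi^{ij}\frac{\partial g}{\partial x_i}\frac{\partial h}{\partial x_j}$, and for $h\in C^\infty(\mathcal{G}^* )$ the Hamiltonian vector field is defined by $A_h(g)=\{h,g\}$. For a vector field $A$, $\operatorname{div}A$ is defined by $L_A V=(\operatorname{div}A)V$ with $V=dx_1\wedge\dots\wedge dx_n$. A function $m$ is a last multiplier of $A$ if $d(m\,i_AV)=0$, equivalently $A(m)+m\operatorname{div}A=0$. *)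

theory Defs
  imports "HOL-Analysis.Analysis"
begin

text \<open>Coordinates on the dual space: a point of G* is x :: real ^ 'n, with
  x $ i the i-th linear coordinate. Partial derivative along x_i.\<close>

definition pd :: "'n::finite \<Rightarrow> (real ^ 'n \<Rightarrow> real) \<Rightarrow> real ^ 'n \<Rightarrow> real" where
  "pd i g x = deriv (\<lambda>t. g (x + t *\<^sub>R axis i 1)) 0"

fun iter_pd :: "'n::finite list \<Rightarrow> (real ^ 'n \<Rightarrow> real) \<Rightarrow> real ^ 'n \<Rightarrow> real" where
  "iter_pd [] g = g"
| "iter_pd (i # is) g = pd i (iter_pd is g)"

definition smooth :: "(real ^ 'n::finite \<Rightarrow> real) \<Rightarrow> bool" where
  "smooth g \<longleftrightarrow> (\<forall>is. iter_pd is g differentiable_on UNIV)"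

text \<open>Lie algebra structure constants: [e_i,e_j] = sum_k c i j k e_k.\<close>
definition lie_structure_constants :: "('n::finite \<Rightarrow> 'n \<Rightarrow> 'n \<Rightarrow> real) \<Rightarrow> bool" where
  "lie_structure_constants c \<longleftrightarrow>
     (\<forall>i j k. c i j k = - c j i k) \<and>
     (\<forall>i j k m. (\<Sum>l\<in>UNIV. c i j l * c l k m + c j k l * c l i m + c k i l * c l j m) = 0)"

definition lie_poisson :: "('n::finite \<Rightarrow> 'n \<Rightarrow> 'n \<Rightarrow> real) \<Rightarrow> 'n \<Rightarrow> 'n \<Rightarrow> real ^ 'n \<Rightarrow> real" where
  "lie_poisson c i j x = (\<Sum>k\<in>UNIV. c i j k * x $ k)"

definition poisson_bracket ::
  "('n::finite \<Rightarrow> 'n \<Rightarrow> 'n \<Rightarrow> real) \<Rightarrow> (real ^ 'n \<Rightarrow> real) \<Rightarrow> (real ^ 'n \<Rightarrow> real) \<Rightarrow> real ^ 'n \<Rightarrow> real" where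
  "poisson_bracket c g h x = (\<Sum>i\<in>UNIV. \<Sum>j\<in>UNIV. lie_poisson c i j x * pd i g x * pd j h x)"

text \<open>A vector field is given by its component functions: A = sum_j A j d/dx_j.\<close>
type_synonym 'n vfield = "'n \<Rightarrow> real ^ 'n \<Rightarrow> real"

definition vf_apply :: "'n::finite vfield \<Rightarrow> (real ^ 'n \<Rightarrow> real) \<Rightarrow> real ^ 'n \<Rightarrow> real" where
  "vf_apply A g x = (\<Sum>j\<in>UNIV. A j x * pd j g x)"

text \<open>Hamiltonian vector field A_h, A_h(g) = {h,g}: component j is sum_i pi^{ij} dh/dx_i.\<close>
definition hamiltonian_vf :: "('n::finite \<Rightarrow> 'n \<Rightarrow> 'n \<Rightarrow> real) \<Rightarrow> (real ^ 'n \<Rightarrow> real) \<Rightarrow> 'n vfield" where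
  "hamiltonian_vf c h = (\<lambda>j x. \<Sum>i\<in>UNIV. lie_poisson c i j x * pd i h x)"

text \<open>Divergence w.r.t. the volume dx_1 ^ ... ^ dx_n: L_A V = (div A) V,
  which in linear coordinates is sum_j d A_j / dx_j.\<close>
definition divergence :: "'n::finite vfield \<Rightarrow> real ^ 'n \<Rightarrow> real" where
  "divergence A x = (\<Sum>j\<in>UNIV. pd j (A j) x)"

definition last_multiplier :: "'n::finite vfield \<Rightarrow> (real ^ 'n \<Rightarrow> real) \<Rightarrow> bool" where
  "last_multiplier A m \<longleftrightarrow> (\<forall>x. vf_apply A m x + m x * divergence A x = 0)"

end

theory Submission
  imports Defs
begin

(* The Hamiltonian vector field of f annihilates f, because A_f(f) = {f,f} = 0 by antisymmetry
   of the Lie-Poisson tensor. Its divergence is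
     sum_{i,j} d/dx_j (pi^{ij} df/dx_i) = sum_{i,j} c_ij^j df/dx_i + sum_{i,j} pi^{ij} d^2f/dx_i dx_j,
   where the second sum vanishes since pi is antisymmetric and the Hessian of f is symmetric.
   Hence f is a last multiplier of A_f iff f G = 0 everywhere, G = sum_{i,j} c_ij^j df/dx_i.
   Conversely, near a point where G does not vanish, f vanishes identically, so its partial
   derivatives and with them G vanish at that point: a contradiction. *)

lemma has_real_derivative_along_line:
  fixes g :: "real ^ 'n::finite \<Rightarrow> real"
  assumes "(g has_derivative D) (at (y + t *\<^sub>R v))"
  shows "((\<lambda>s. g (y + s *\<^sub>R v)) has_real_derivative D v) (at t)"
proof -
  have line: "((\<lambda>s. y + s *\<^sub>R v) has_derivative (\<lambda>s. s *\<^sub>R v)) (at t)"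
    by (auto intro!: derivative_eq_intros)
  have "((g \<circ> (\<lambda>s. y + s *\<^sub>R v)) has_derivative (D \<circ> (\<lambda>s. s *\<^sub>R v))) (at t)"
    using diff_chain_at[OF line assms] .
  moreover have "D \<circ> (\<lambda>s. s *\<^sub>R v) = (*) (D v)"
    using has_derivative_linear[OF assms] by (auto simp: linear_scale o_def fun_eq_iff)
  ultimately show ?thesis
    unfolding has_field_derivative_def by (simp add: o_def)
qed

lemma pd_eq_derivative:
  fixes g :: "real ^ 'n::finite \<Rightarrow> real"
  assumes "(g has_derivative D) (at p)"
  shows "pd i g p = D (axis i 1)"
proof -
  have "((\<lambda>t. g (p + t *\<^sub>R axis i 1)) has_real_derivative D (axis i 1)) (at 0)"
    by (rule has_real_derivative_along_line) (use assms in simp)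
  then show ?thesis
    unfolding pd_def by (rule DERIV_imp_deriv)
qed

lemma has_real_derivative_pd:
  fixes g :: "real ^ 'n::finite \<Rightarrow> real"
  assumes "g differentiable (at (y + t *\<^sub>R axis i 1))"
  shows "((\<lambda>s. g (y + s *\<^sub>R axis i 1)) has_real_derivative pd i g (y + t *\<^sub>R axis i 1)) (at t)"
proof -
  obtain D where "(g has_derivative D) (at (y + t *\<^sub>R axis i 1))"
    using assms unfolding differentiable_def by blast
  then show ?thesis
    using has_real_derivative_along_line pd_eq_derivative by metis
qed

lemma pd_eq_0_if_vanishes_on_open:
  fixes g :: "real ^ 'n::finite \<Rightarrow> real"
  assumes "open S" and "p \<in> S" and "\<And>y. y \<in> S \<Longrightarrow> g y = 0"
  shows "pd i g p = 0"
proof -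
  have "(g has_derivative (\<lambda>_. 0)) (at p)"
    by (rule has_derivative_transform_within_open[of "\<lambda>_. 0" _ _ _ S]) (use assms in auto)
  then show ?thesis
    using pd_eq_derivative by fastforce
qed

lemma smooth_imp_differentiable_iter_pd:
  "smooth g \<Longrightarrow> iter_pd is g differentiable (at p)"
  unfolding smooth_def differentiable_on_def by simp

lemma second_difference_mean_value:
  fixes g :: "real ^ 'n::finite \<Rightarrow> real"
  assumes "\<And>p. g differentiable (at p)" and "\<And>p. pd i g differentiable (at p)"
    and "h > 0"
  obtains t s where "0 < t" "t < h" "0 < s" "s < h"
    "g (x + h *\<^sub>R axis i 1 + h *\<^sub>R axis j 1) - g (x + h *\<^sub>R axis i 1)
       - g (x + h *\<^sub>R axis j 1) + g x
     = h\<^sup>2 * pd j (pd i g) (x + t *\<^sub>R axis i 1 + s *\<^sub>R axis j 1)"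
proof -
  define e :: "real ^ 'n" where "e = axis i 1"
  define u :: "real ^ 'n" where "u = axis j 1"
  define \<phi> where "\<phi> t = g ((x + h *\<^sub>R u) + t *\<^sub>R e) - g (x + t *\<^sub>R e)" for t
  define \<psi> where "\<psi> t s = pd i g ((x + t *\<^sub>R e) + s *\<^sub>R u)" for t s
  have "DERIV \<phi> t :> pd i g ((x + h *\<^sub>R u) + t *\<^sub>R e) - pd i g (x + t *\<^sub>R e)" for t
    unfolding \<phi>_def e_def by (intro DERIV_diff has_real_derivative_pd assms)
  moreover have shift: "x + h *\<^sub>R u + t *\<^sub>R e = x + t *\<^sub>R e + h *\<^sub>R u" for t
    by (simp add: algebra_simps)
  ultimately have "DERIV \<phi> t :> \<psi> t h - \<psi> t 0" for t
    unfolding \<psi>_def by (simp only: shift scale_zero_left add_0_right)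
  then obtain t where t: "0 < t" "t < h" "\<phi> h - \<phi> 0 = h * (\<psi> t h - \<psi> t 0)"
    using MVT2[OF \<open>h > 0\<close>, of \<phi> "\<lambda>t. \<psi> t h - \<psi> t 0"] by auto
  have "DERIV (\<psi> t) s :> pd j (pd i g) ((x + t *\<^sub>R e) + s *\<^sub>R u)" for s
    unfolding \<psi>_def u_def by (intro has_real_derivative_pd assms)
  then obtain s where s: "0 < s" "s < h"
    "\<psi> t h - \<psi> t 0 = h * pd j (pd i g) ((x + t *\<^sub>R e) + s *\<^sub>R u)"
    using MVT2[OF \<open>h > 0\<close>, of "\<psi> t" "\<lambda>s. pd j (pd i g) ((x + t *\<^sub>R e) + s *\<^sub>R u)"]
    by auto
  have "g (x + h *\<^sub>R e + h *\<^sub>R u) - g (x + h *\<^sub>R e) - g (x + h *\<^sub>R u) + g x = \<phi> h - \<phi> 0"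
    unfolding \<phi>_def by (simp add: algebra_simps)
  also have "\<dots> = h\<^sup>2 * pd j (pd i g) ((x + t *\<^sub>R e) + s *\<^sub>R u)"
    using t(3) s(3) by (simp add: power2_eq_square)
  finally show ?thesis
    using that t s unfolding e_def u_def by blast
qed

lemma pd_pd_commute:
  fixes g :: "real ^ 'n::finite \<Rightarrow> real"
  assumes "\<And>p. g differentiable (at p)" and "\<And>k p. pd k g differentiable (at p)"
    and "isCont (pd j (pd i g)) x" and "isCont (pd i (pd j g)) x"
  shows "pd j (pd i g) x = pd i (pd j g) x"
proof -
  let ?D\<^sub>1 = "pd j (pd i g)" and ?D\<^sub>2 = "pd i (pd j g)"
  have close: "\<bar>?D\<^sub>1 x - ?D\<^sub>2 x\<bar> < \<epsilon>" if "\<epsilon> > 0" for \<epsilon>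
  proof -
    obtain r\<^sub>1 where "r\<^sub>1 > 0" and r\<^sub>1: "\<And>y. dist y x < r\<^sub>1 \<Longrightarrow> dist (?D\<^sub>1 y) (?D\<^sub>1 x) < \<epsilon>/2"
      using assms(3) \<open>\<epsilon> > 0\<close> unfolding continuous_at_eps_delta by (meson half_gt_zero)
    obtain r\<^sub>2 where "r\<^sub>2 > 0" and r\<^sub>2: "\<And>y. dist y x < r\<^sub>2 \<Longrightarrow> dist (?D\<^sub>2 y) (?D\<^sub>2 x) < \<epsilon>/2"
      using assms(4) \<open>\<epsilon> > 0\<close> unfolding continuous_at_eps_delta by (meson half_gt_zero)
    define h where "h = min r\<^sub>1 r\<^sub>2 / 2"
    have "h > 0"
      using \<open>r\<^sub>1 > 0\<close> \<open>r\<^sub>2 > 0\<close> by (simp add: h_def)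
    have near: "dist (x + a *\<^sub>R axis k 1 + b *\<^sub>R axis l 1) x < min r\<^sub>1 r\<^sub>2"
      if "0 < a" "a < h" "0 < b" "b < h" for a b and k l :: 'n
    proof -
      have "norm (a *\<^sub>R axis k 1 + b *\<^sub>R axis l 1 :: real ^ 'n) \<le> a + b"
        using norm_triangle_ineq[of "a *\<^sub>R axis k 1 :: real ^ 'n" "b *\<^sub>R axis l 1"] that by simp
      then show ?thesis
        using that by (simp add: dist_norm h_def)
    qed
    \<comment> \<open>The second difference of g is symmetric in i and j; expanding it by the mean value
      theorem in both orders yields nearby points where the two mixed partials agree.\<close>
    obtain t s where ts: "0 < t" "t < h" "0 < s" "s < h"
      "g (x + h *\<^sub>R axis i 1 + h *\<^sub>R axis j 1) - g (x + h *\<^sub>R axis i 1)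
         - g (x + h *\<^sub>R axis j 1) + g x
       = h\<^sup>2 * ?D\<^sub>1 (x + t *\<^sub>R axis i 1 + s *\<^sub>R axis j 1)"
      using second_difference_mean_value[OF assms(1,2) \<open>h > 0\<close>] by blast
    obtain t' s' where ts': "0 < t'" "t' < h" "0 < s'" "s' < h"
      "g (x + h *\<^sub>R axis j 1 + h *\<^sub>R axis i 1) - g (x + h *\<^sub>R axis j 1)
         - g (x + h *\<^sub>R axis i 1) + g x
       = h\<^sup>2 * ?D\<^sub>2 (x + t' *\<^sub>R axis j 1 + s' *\<^sub>R axis i 1)"
      using second_difference_mean_value[OF assms(1,2) \<open>h > 0\<close>] by blast
    have "x + h *\<^sub>R axis j 1 + h *\<^sub>R axis i 1 = x + h *\<^sub>R axis i 1 + h *\<^sub>R axis j 1"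
      by (simp add: algebra_simps)
    then have "h\<^sup>2 * ?D\<^sub>1 (x + t *\<^sub>R axis i 1 + s *\<^sub>R axis j 1)
        = h\<^sup>2 * ?D\<^sub>2 (x + t' *\<^sub>R axis j 1 + s' *\<^sub>R axis i 1)"
      using ts(5) ts'(5) by (simp add: algebra_simps)
    then have "?D\<^sub>1 (x + t *\<^sub>R axis i 1 + s *\<^sub>R axis j 1) = ?D\<^sub>2 (x + t' *\<^sub>R axis j 1 + s' *\<^sub>R axis i 1)"
      using \<open>h > 0\<close> by simp
    moreover have "dist (?D\<^sub>1 (x + t *\<^sub>R axis i 1 + s *\<^sub>R axis j 1)) (?D\<^sub>1 x) < \<epsilon>/2"
      using r\<^sub>1 near[OF ts(1-4)] by simp
    moreover have "dist (?D\<^sub>2 (x + t' *\<^sub>R axis j 1 + s' *\<^sub>R axis i 1)) (?D\<^sub>2 x) < \<epsilon>/2"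
      using r\<^sub>2 near[OF ts'(1-4)] by simp
    ultimately show ?thesis
      unfolding dist_real_def by linarith
  qed
  show ?thesis
  proof (rule ccontr)
    assume "?D\<^sub>1 x \<noteq> ?D\<^sub>2 x"
    then show False
      using close[of "\<bar>?D\<^sub>1 x - ?D\<^sub>2 x\<bar>"] by simp
  qed
qed

lemma lie_poisson_antisym:
  assumes "\<And>i j k. c i j k = - c j i k"
  shows "lie_poisson c i j x = - lie_poisson c j i x"
  unfolding lie_poisson_def by (subst assms) (simp add: sum_negf)

lemma lie_poisson_along_axis:
  "lie_poisson c i j (x + t *\<^sub>R axis m 1) = lie_poisson c i j x + t * c i j m"
proof -
  have "(\<Sum>k\<in>UNIV. c i j k * (x + t *\<^sub>R axis m 1) $ k)
      = (\<Sum>k\<in>UNIV. c i j k * x $ k + (if k = m then t * c i j m else 0))"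
    by (rule sum.cong) (auto simp: axis_def algebra_simps)
  then show ?thesis
    unfolding lie_poisson_def by (simp add: sum.distrib)
qed

lemma sum_antisym_mult_sym_eq_0:
  fixes P F :: "'n::finite \<Rightarrow> 'n \<Rightarrow> real"
  assumes "\<And>i j. P i j = - P j i" and "\<And>i j. F i j = F j i"
  shows "(\<Sum>i\<in>UNIV. \<Sum>j\<in>UNIV. P i j * F i j) = 0"
proof -
  have "(\<Sum>i\<in>UNIV. \<Sum>j\<in>UNIV. P i j * F i j) = (\<Sum>j\<in>UNIV. \<Sum>i\<in>UNIV. P i j * F i j)"
    by (rule sum.swap)
  also have "\<dots> = (\<Sum>j\<in>UNIV. \<Sum>i\<in>UNIV. - (P j i * F j i))"
    by (intro sum.cong refl) (metis assms mult_minus_left)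
  also have "\<dots> = - (\<Sum>j\<in>UNIV. \<Sum>i\<in>UNIV. P j i * F j i)"
    by (simp add: sum_negf)
  finally show ?thesis by simp
qed

lemma vf_apply_hamiltonian_vf:
  "vf_apply (hamiltonian_vf c h) g x = poisson_bracket c h g x"
  unfolding vf_apply_def hamiltonian_vf_def poisson_bracket_def
  by (subst sum.swap) (simp add: sum_distrib_right)

lemma poisson_bracket_self:
  assumes "\<And>i j k. c i j k = - c j i k"
  shows "poisson_bracket c g g x = 0"
  unfolding poisson_bracket_def mult.assoc
  by (rule sum_antisym_mult_sym_eq_0) (rule lie_poisson_antisym[OF assms], simp)

lemma pd_hamiltonian_vf:
  fixes f :: "real ^ 'n::finite \<Rightarrow> real"
  assumes "\<And>i. pd i f differentiable (at x)"
  shows "pd j (hamiltonian_vf c f j) x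
     = (\<Sum>i\<in>UNIV. c i j j * pd i f x + lie_poisson c i j x * pd j (pd i f) x)"
proof -
  have "((\<lambda>t. hamiltonian_vf c f j (x + t *\<^sub>R axis j 1)) has_real_derivative
      (\<Sum>i\<in>UNIV. c i j j * pd i f x + lie_poisson c i j x * pd j (pd i f) x)) (at 0)"
    unfolding hamiltonian_vf_def
  proof (rule DERIV_sum)
    fix i
    have "((\<lambda>t. lie_poisson c i j (x + t *\<^sub>R axis j 1)) has_real_derivative c i j j) (at 0)"
      unfolding lie_poisson_along_axis by (auto intro!: derivative_eq_intros)
    moreover have "((\<lambda>t. pd i f (x + t *\<^sub>R axis j 1)) has_real_derivative pd j (pd i f) x) (at 0)"
      using has_real_derivative_pd[of "pd i f" x 0 j] assms by simp
    ultimately show "((\<lambda>t. lie_poisson c i j (x + t *\<^sub>R axis j 1) * pd i f (x + t *\<^sub>R axis j 1))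
        has_real_derivative c i j j * pd i f x + lie_poisson c i j x * pd j (pd i f) x) (at 0)"
      by (auto intro: DERIV_cong[OF DERIV_mult])
  qed
  then show ?thesis
    unfolding pd_def by (rule DERIV_imp_deriv)
qed

lemma divergence_hamiltonian_vf:
  fixes f :: "real ^ 'n::finite \<Rightarrow> real"
  assumes antisym: "\<And>i j k. c i j k = - c j i k" and "smooth f"
  shows "divergence (hamiltonian_vf c f) x = (\<Sum>i\<in>UNIV. \<Sum>j\<in>UNIV. c i j j * pd i f x)"
proof -
  have diff: "iter_pd is f differentiable (at p)" for "is" p
    using smooth_imp_differentiable_iter_pd[OF \<open>smooth f\<close>] .
  have hessian_sym: "pd j (pd i f) x = pd i (pd j f) x" for i j
    using diff[of "[]"] diff[of "[_]"] diff[of "[_, _]"]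
    by (intro pd_pd_commute differentiable_imp_continuous_within) auto
  have "divergence (hamiltonian_vf c f) x
     = (\<Sum>j\<in>UNIV. \<Sum>i\<in>UNIV. c i j j * pd i f x)
       + (\<Sum>j\<in>UNIV. \<Sum>i\<in>UNIV. lie_poisson c i j x * pd j (pd i f) x)"
    unfolding divergence_def using diff[of "[_]"] by (simp add: pd_hamiltonian_vf sum.distrib)
  also have "(\<Sum>j\<in>UNIV. \<Sum>i\<in>UNIV. lie_poisson c i j x * pd j (pd i f) x) = 0"
    by (rule sum_antisym_mult_sym_eq_0) (rule lie_poisson_antisym[OF antisym], rule hessian_sym)
  also have "(\<Sum>j\<in>UNIV. \<Sum>i\<in>UNIV. c i j j * pd i f x) = (\<Sum>i\<in>UNIV. \<Sum>j\<in>UNIV. c i j j * pd i f x)"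
    by (rule sum.swap)
  finally show ?thesis
    by simp
qed

lemma last_multiplier_hamiltonian_vf_self_iff:
  fixes f :: "real ^ 'n::finite \<Rightarrow> real"
  assumes "\<And>i j k. c i j k = - c j i k" and "smooth f"
  shows "last_multiplier (hamiltonian_vf c f) f
     \<longleftrightarrow> (\<forall>x. f x * (\<Sum>i\<in>UNIV. \<Sum>j\<in>UNIV. c i j j * pd i f x) = 0)"
  unfolding last_multiplier_def
  by (simp add: vf_apply_hamiltonian_vf poisson_bracket_self[OF assms(1)]
      divergence_hamiltonian_vf[OF assms])

lemma pd_combination_eq_0_if_mult_eq_0:
  fixes g :: "real ^ 'n::finite \<Rightarrow> real" and a :: "'n \<Rightarrow> real"
  assumes "\<And>i. isCont (pd i g) x" and "\<And>y. g y * (\<Sum>i\<in>UNIV. a i * pd i g y) = 0"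
  shows "(\<Sum>i\<in>UNIV. a i * pd i g x) = 0"
proof (rule ccontr)
  define G where "G y = (\<Sum>i\<in>UNIV. a i * pd i g y)" for y
  assume "(\<Sum>i\<in>UNIV. a i * pd i g x) \<noteq> 0"
  then have "G x \<noteq> 0" unfolding G_def .
  moreover have "isCont G x"
    unfolding G_def by (intro continuous_intros assms(1))
  ultimately obtain r where "r > 0" and r: "\<And>y. dist y x < r \<Longrightarrow> dist (G y) (G x) < \<bar>G x\<bar>"
    unfolding continuous_at_eps_delta by (meson zero_less_abs_iff)
  have "g y = 0" if "y \<in> ball x r" for y
  proof -
    have "G y \<noteq> 0"
      using r[of y] that by (auto simp: dist_commute dist_real_def)
    then show ?thesis
      using assms(2)[of y] by (simp add: G_def)
  qed
  then have "pd i g x = 0" for i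
    using \<open>r > 0\<close> by (intro pd_eq_0_if_vanishes_on_open[of "ball x r"]) auto
  then have "G x = 0" unfolding G_def by simp
  with \<open>G x \<noteq> 0\<close> show False by contradiction
qed

theorem proposition2p6:
  fixes c :: "'n::finite \<Rightarrow> 'n \<Rightarrow> 'n \<Rightarrow> real" and f :: "real ^ 'n \<Rightarrow> real"
  assumes "lie_structure_constants c"
    and "smooth f"
  shows "last_multiplier (hamiltonian_vf c f) f \<longleftrightarrow>
           (\<forall>x. (\<Sum>i\<in>UNIV. \<Sum>j\<in>UNIV. c i j j * pd i f x) = 0)"
proof -
  have antisym: "c i j k = - c j i k" for i j k
    using assms(1) unfolding lie_structure_constants_def by blast
  have continuous_pd: "isCont (pd i f) x" for i x
    using smooth_imp_differentiable_iter_pd[OF assms(2), of "[i]"]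
    by (simp add: differentiable_imp_continuous_within)
  have regroup: "(\<Sum>i\<in>UNIV. \<Sum>j\<in>UNIV. c i j j * pd i f x) = (\<Sum>i\<in>UNIV. (\<Sum>j\<in>UNIV. c i j j) * pd i f x)"
    for x by (simp add: sum_distrib_right)
  have "last_multiplier (hamiltonian_vf c f) f
      \<longleftrightarrow> (\<forall>x. f x * (\<Sum>i\<in>UNIV. (\<Sum>j\<in>UNIV. c i j j) * pd i f x) = 0)"
    unfolding last_multiplier_hamiltonian_vf_self_iff[OF antisym assms(2)] regroup ..
  also have "\<dots> \<longleftrightarrow> (\<forall>x. (\<Sum>i\<in>UNIV. (\<Sum>j\<in>UNIV. c i j j) * pd i f x) = 0)"
    using pd_combination_eq_0_if_mult_eq_0[OF continuous_pd] by auto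
  finally show ?thesis
    unfolding regroup .
qed

end
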